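(* Let $\mu_Y\in\mathbb{R}$, $\sigma_Y>0$, $n\ge 2$, and let $X_1,\dots,X_n$ be i.i.d. with $X_i\sim LN(\mu_Y,\sigma_Y^2)$. Let $A_n=\frac1n\sum_{i=1}^n X_i$, $H_n=n\big/\sum_{i=1}^n (1/X_i)$, $K_n=\frac{A_n}{H_n}-1$, and $k=C_v^2=\exp(\sigma_Y^2)-1$. Then $$\operatorname{Var}(K_n)=\frac{2(n-1)}{n^2}\,k^2\left(1+k+\frac{k^2}{2n}\right)=\frac{2(n-1)}{n^2}\,C_v^4\left(1+C_v^2+\frac{C_v^4}{2n}\right),$$ and consequently $$\operatorname{sd}(K_n)=\frac{k}{n}\sqrt{2(n-1)\left(1+k+\frac{k^2}{2n}\right)}.$$
   Context: $X\sim LN(\mu_Y,\sigma_Y^2)$ means $\ln X\sim N(\mu_Y,\sigma_Y^2)$. For such $X$, $C_v=\sqrt{\operatorname{Var}(X)}/E[X]$ is the coefficient of variation and $k=E[X]\,E[1/X]-1$; one has $k=C_v^2=\exp(\sigma_Y^2)-1$. $\operatorname{sd}$ denotes the standard deviation (square root of the variance). *)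

theory Defs
  imports "HOL-Probability.Probability"
begin

definition lognormal_rv :: "'a measure \<Rightarrow> ('a \<Rightarrow> real) \<Rightarrow> real \<Rightarrow> real \<Rightarrow> bool" where
  "lognormal_rv M X m sg \<longleftrightarrow>
     X \<in> borel_measurable M \<and> (AE w in M. 0 < X w) \<and>
     distributed M lborel (\<lambda>w. ln (X w)) (\<lambda>y. ennreal (normal_density m sg y))"

end

theory Submission
  imports Defs
begin

text \<open>Since \<open>A\<^sub>n / H\<^sub>n = S / n\<^sup>2\<close> with \<open>S = (\<Sum>i. X\<^sub>i) (\<Sum>j. 1 / X\<^sub>j) = \<Sum>i j. X\<^sub>i / X\<^sub>j\<close>,
the variance of \<open>K\<^sub>n\<close> is \<open>Var S / n\<^sup>4\<close>. Each product \<open>X\<^sub>i X\<^sub>k / (X\<^sub>j X\<^sub>l)\<close> is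
\<open>exp (\<Sum>m. e\<^sub>m ln X\<^sub>m)\<close> for an integer vector \<open>e\<close> with \<open>\<Sum>m. e\<^sub>m = 0\<close>, so by independence and the
normal moment generating function its mean is \<open>exp (\<sigma>\<^sup>2/2 \<Sum>m. e\<^sub>m\<^sup>2)\<close>, a power of \<open>q = exp \<sigma>\<^sup>2\<close>
that depends only on which of \<open>i, j, k, l\<close> coincide. Summing over all index quadruples is the
remaining computation: the mean factors into one term \<open>1 + c \<delta>\<close> per pair of indices that may
coincide, and the sums over \<open>j\<close> and \<open>l\<close> then reduce to sums of Kronecker deltas.\<close>

lemma normal_density_mult_exp:
  assumes "0 < \<sigma>"
  shows "exp (a * y) * normal_density \<mu> \<sigma> y
    = exp (a * \<mu> + a\<^sup>2 * \<sigma>\<^sup>2 / 2) * normal_density (\<mu> + a * \<sigma>\<^sup>2) \<sigma> y"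
proof -
  have "a * y + - (y - \<mu>)\<^sup>2 / (2 * \<sigma>\<^sup>2)
      = (a * \<mu> + a\<^sup>2 * \<sigma>\<^sup>2 / 2) + - (y - (\<mu> + a * \<sigma>\<^sup>2))\<^sup>2 / (2 * \<sigma>\<^sup>2)"
    using assms by (simp add: field_simps power2_eq_square)
  then show ?thesis
    unfolding normal_density_def by (simp add: exp_add[symmetric] algebra_simps)
qed

lemma lognormal_rv_moment:
  assumes "lognormal_rv M Y \<mu> \<sigma>" "0 < \<sigma>"
  shows "integrable M (\<lambda>w. exp (a * ln (Y w)))"
    and "(\<integral>w. exp (a * ln (Y w)) \<partial>M) = exp (a * \<mu> + a\<^sup>2 * \<sigma>\<^sup>2 / 2)"
proof -
  have distr: "distributed M lborel (\<lambda>w. ln (Y w)) (\<lambda>y. ennreal (normal_density \<mu> \<sigma> y))"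
    using assms(1) unfolding lognormal_rv_def by auto
  have shifted: "(\<lambda>y. normal_density \<mu> \<sigma> y * exp (a * y))
      = (\<lambda>y. exp (a * \<mu> + a\<^sup>2 * \<sigma>\<^sup>2 / 2) * normal_density (\<mu> + a * \<sigma>\<^sup>2) \<sigma> y)"
    using normal_density_mult_exp[OF assms(2), of a] by (auto simp: fun_eq_iff mult.commute)
  show "integrable M (\<lambda>w. exp (a * ln (Y w)))"
    using distributed_integrable[OF distr, of "\<lambda>y. exp (a * y)"] assms(2) by (simp add: shifted)
  show "(\<integral>w. exp (a * ln (Y w)) \<partial>M) = exp (a * \<mu> + a\<^sup>2 * \<sigma>\<^sup>2 / 2)"
    using distributed_integral[OF distr, of "\<lambda>y. exp (a * y)"] assms(2) by (simp add: shifted)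
qed

lemma (in prob_space) variance_affine_integrable:
  fixes X :: "'a \<Rightarrow> real"
  assumes "integrable M X" "integrable M (\<lambda>x. (X x)\<^sup>2)"
  shows "integrable M (\<lambda>x. (a + b * X x)\<^sup>2)"
    and "variance (\<lambda>x. a + b * X x) = b\<^sup>2 * variance X"
proof -
  have square: "(a + b * X x)\<^sup>2 = a\<^sup>2 + 2 * a * b * X x + b\<^sup>2 * (X x)\<^sup>2" for x
    by (simp add: power2_eq_square algebra_simps)
  show "integrable M (\<lambda>x. (a + b * X x)\<^sup>2)"
    unfolding square using assms by simp
  then show "variance (\<lambda>x. a + b * X x) = b\<^sup>2 * variance X"
    using assms by (simp add: variance_eq square prob_space power2_eq_square algebra_simps)
qed

lemma integrable_integral_cong_AE:
  assumes "integrable M g" "f \<in> borel_measurable M" "AE x in M. f x = g x"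
  shows "integrable M f" and "integral\<^sup>L M f = integral\<^sup>L M g"
  using integrable_cong_AE[OF assms(2) borel_measurable_integrable[OF assms(1)] assms(3)]
    integral_cong_AE[OF assms(2) borel_measurable_integrable[OF assms(1)] assms(3)] assms(1)
  by simp_all

definition ratio_exponent :: "'i \<Rightarrow> 'i \<Rightarrow> 'i \<Rightarrow> 'i \<Rightarrow> real" where
  "ratio_exponent i j k l = 2 + of_bool (i = k) + of_bool (j = l)
     - of_bool (i = j) - of_bool (i = l) - of_bool (k = j) - of_bool (k = l)"

lemma sum_signed_deltas_square:
  assumes "finite A" "i \<in> A" "j \<in> A" "k \<in> A" "l \<in> A"
  shows "(\<Sum>m\<in>A. (of_bool (m = i) - of_bool (m = j) + of_bool (m = k) - of_bool (m = l))\<^sup>2)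
    = 2 * ratio_exponent i j k l"
proof -
  have "(of_bool (m = i) - of_bool (m = j) + of_bool (m = k) - of_bool (m = l) :: real)\<^sup>2
    = of_bool (m = i) * (1 + 2 * of_bool (i = k) - 2 * of_bool (i = j) - 2 * of_bool (i = l))
    + of_bool (m = j) * (1 + 2 * of_bool (j = l) - 2 * of_bool (k = j))
    + of_bool (m = k) * (1 - 2 * of_bool (k = l)) + of_bool (m = l)" for m
    by (simp add: of_bool_def power2_eq_square algebra_simps)
  then show ?thesis
    using assms by (simp add: sum.distrib ratio_exponent_def)
qed

lemma sum_fun_eq_member:
  assumes "finite I" "i \<in> I"
  shows "(\<Sum>k\<in>I. F (i = k)) = F True + (real (card I) - 1) * F False"
proof -
  have "(\<Sum>k\<in>I. F (i = k)) = F True + (\<Sum>k\<in>I - {i}. F (i = k))"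
    using sum.remove[OF assms, of "\<lambda>k. F (i = k)"] by simp
  also have "(\<Sum>k\<in>I - {i}. F (i = k)) = (\<Sum>k\<in>I - {i}. F False)"
    by (intro sum.cong) auto
  also have "\<dots> = (real (card I) - 1) * F False"
  proof -
    have "1 \<le> card I"
      using assms by (metis One_nat_def Suc_leI card_gt_0_iff empty_iff)
    with assms show ?thesis
      by (simp add: of_nat_diff)
  qed
  finally show ?thesis .
qed

lemma exp_mult_of_bool: "exp (c * of_bool P) = 1 + (exp c - 1) * of_bool P"
  by (cases P) auto

lemma exp_ratio_exponent_factors:
  fixes s :: real
  defines "q \<equiv> exp s" and "r \<equiv> exp (- s) - 1"
  shows "exp (s * ratio_exponent i j k l)
    = q\<^sup>2 * (1 + (q - 1) * of_bool (i = k)) * (1 + (q - 1) * of_bool (j = l))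
      * ((1 + r * of_bool (i = j)) * (1 + r * of_bool (k = j)))
      * ((1 + r * of_bool (i = l)) * (1 + r * of_bool (k = l)))"
proof -
  have "s * ratio_exponent i j k l
     = s + s + s * of_bool (i = k) + s * of_bool (j = l) + (- s) * of_bool (i = j)
       + (- s) * of_bool (k = j) + (- s) * of_bool (i = l) + (- s) * of_bool (k = l)"
    by (simp add: ratio_exponent_def algebra_simps)
  then show ?thesis
    unfolding q_def r_def
    by (simp only: exp_add exp_mult_of_bool power2_eq_square ac_simps)
qed

lemma sum_one_plus_delta_product:
  assumes "finite I" "i \<in> I" "k \<in> I"
  shows "(\<Sum>j\<in>I. (1 + r * of_bool (i = j)) * (1 + r * of_bool (k = j)))
     = real (card I) + 2 * r + r\<^sup>2 * of_bool (i = k)"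
proof -
  have "(1 + r * of_bool (i = j)) * (1 + r * of_bool (k = j)) =
     1 + r * of_bool (j = i) + r * of_bool (j = k) + r\<^sup>2 * of_bool (i = k) * of_bool (j = i)" for j
    by (simp add: algebra_simps power2_eq_square)
  then show ?thesis using assms by (simp add: sum.distrib)
qed

lemma sum_sum_one_plus_diagonal:
  fixes f :: "'i \<Rightarrow> real"
  assumes "finite I"
  shows "(\<Sum>j\<in>I. \<Sum>l\<in>I. (1 + c * of_bool (j = l)) * (f j * f l))
     = (\<Sum>j\<in>I. f j)\<^sup>2 + c * (\<Sum>j\<in>I. (f j)\<^sup>2)"
proof -
  have "(1 + c * of_bool (j = l)) * (f j * f l) = f j * f l + of_bool (l = j) * (c * (f j)\<^sup>2)" for j l
    by (cases "j = l") (simp_all add: algebra_simps power2_eq_square)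
  then show ?thesis
    using assms by (simp add: sum.distrib power2_eq_square sum_product sum_distrib_left[symmetric])
qed

lemma sum4_exp_ratio_exponent:
  fixes s :: real
  assumes "finite I"
  defines "n \<equiv> real (card I)" and "q \<equiv> exp s"
  shows "(\<Sum>i\<in>I. \<Sum>k\<in>I. \<Sum>j\<in>I. \<Sum>l\<in>I. exp (s * ratio_exponent i j k l))
     = 2 * (n - 1) * n\<^sup>2 * (q - 1)\<^sup>2 * (1 + (q - 1) + (q - 1)\<^sup>2 / (2 * n))
       + (n + n * (n - 1) * q)\<^sup>2"
proof -
  define r where "r = 1 / q - 1"
  define r' where "r' = 1 / q\<^sup>2 - 1"
  define F where "F b = q\<^sup>2 * (1 + (q - 1) * of_bool b)
      * ((n + 2 * r + r\<^sup>2 * of_bool b)\<^sup>2 + (q - 1) * (n + 2 * r' + r'\<^sup>2 * of_bool b))" for b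
  have q_pos: "0 < q"
    unfolding q_def by simp
  have r: "exp (- s) - 1 = r"
    unfolding r_def q_def by (simp add: exp_minus field_simps)
  have inner: "(\<Sum>j\<in>I. \<Sum>l\<in>I. exp (s * ratio_exponent i j k l)) = F (i = k)"
    if "i \<in> I" "k \<in> I" for i k
  proof -
    define h where "h j = (1 + r * of_bool (i = j)) * (1 + r * of_bool (k = j))" for j
    have h_square: "(h j)\<^sup>2 = (1 + r' * of_bool (i = j)) * (1 + r' * of_bool (k = j))" for j
      using q_pos unfolding h_def r_def r'_def
      by (simp add: of_bool_def power2_eq_square field_simps)
    have "(\<Sum>j\<in>I. \<Sum>l\<in>I. exp (s * ratio_exponent i j k l))
      = q\<^sup>2 * (1 + (q - 1) * of_bool (i = k)) * (\<Sum>j\<in>I. \<Sum>l\<in>I. (1 + (q - 1) * of_bool (j = l)) * (h j * h l))"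
      unfolding exp_ratio_exponent_factors r q_def[symmetric] h_def
      by (simp add: sum_distrib_left ac_simps)
    also have "\<dots> = F (i = k)"
      unfolding sum_sum_one_plus_diagonal[OF assms(1)] h_square F_def n_def
      using sum_one_plus_delta_product[OF assms(1) that] by (simp add: h_def)
    finally show ?thesis .
  qed
  have "(\<Sum>i\<in>I. \<Sum>k\<in>I. \<Sum>j\<in>I. \<Sum>l\<in>I. exp (s * ratio_exponent i j k l))
      = (\<Sum>i\<in>I. F True + (n - 1) * F False)"
    using assms(1) by (simp add: inner sum_fun_eq_member n_def)
  also have "\<dots> = n * (F True + (n - 1) * F False)"
    by (simp add: n_def)
  also have "\<dots> = 2 * (n - 1) * n\<^sup>2 * (q - 1)\<^sup>2 * (1 + (q - 1) + (q - 1)\<^sup>2 / (2 * n))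
       + (n + n * (n - 1) * q)\<^sup>2"
  proof (cases "n = 0")
    case False
    then show ?thesis
      using q_pos unfolding F_def r_def r'_def by (simp add: field_simps power2_eq_square)
  qed simp
  finally show ?thesis .
qed

locale lognormal_sample = prob_space +
  fixes X :: "'i \<Rightarrow> 'a \<Rightarrow> real" and I :: "'i set" and \<mu> \<sigma> :: real
  assumes finite_I: "finite I"
    and sigma_pos: "0 < \<sigma>"
    and indep: "indep_vars (\<lambda>_. borel) X I"
    and lognormal: "\<And>i. i \<in> I \<Longrightarrow> lognormal_rv M (X i) \<mu> \<sigma>"
begin

lemma measurable_X [measurable]: "i \<in> I \<Longrightarrow> X i \<in> borel_measurable M"
  using lognormal unfolding lognormal_rv_def by blast

lemma exp_log_combination_moment:
  shows "integrable M (\<lambda>w. exp (\<Sum>m\<in>I. e m * ln (X m w)))"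
    and "expectation (\<lambda>w. exp (\<Sum>m\<in>I. e m * ln (X m w)))
      = exp (\<mu> * (\<Sum>m\<in>I. e m) + \<sigma>\<^sup>2 / 2 * (\<Sum>m\<in>I. (e m)\<^sup>2))"
proof -
  have indep_factors: "indep_vars (\<lambda>_. borel) (\<lambda>m w. exp (e m * ln (X m w))) I"
    by (rule indep_vars_compose2[OF indep]) measurable
  have integrable_factor: "integrable M (\<lambda>w. exp (e m * ln (X m w)))" if "m \<in> I" for m
    using lognormal_rv_moment(1)[OF lognormal[OF that] sigma_pos] .
  have product: "(\<lambda>w. exp (\<Sum>m\<in>I. e m * ln (X m w))) = (\<lambda>w. \<Prod>m\<in>I. exp (e m * ln (X m w)))"
    by (simp add: exp_sum[OF finite_I])
  show "integrable M (\<lambda>w. exp (\<Sum>m\<in>I. e m * ln (X m w)))"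
    unfolding product by (rule indep_vars_integrable[OF finite_I indep_factors integrable_factor])
  have "expectation (\<lambda>w. exp (\<Sum>m\<in>I. e m * ln (X m w)))
      = (\<Prod>m\<in>I. expectation (\<lambda>w. exp (e m * ln (X m w))))"
    unfolding product by (rule indep_vars_lebesgue_integral[OF finite_I indep_factors integrable_factor])
  also have "\<dots> = (\<Prod>m\<in>I. exp (e m * \<mu> + (e m)\<^sup>2 * \<sigma>\<^sup>2 / 2))"
    by (intro prod.cong refl lognormal_rv_moment(2)[OF lognormal sigma_pos])
  also have "\<dots> = exp (\<mu> * (\<Sum>m\<in>I. e m) + \<sigma>\<^sup>2 / 2 * (\<Sum>m\<in>I. (e m)\<^sup>2))"
    by (simp add: exp_sum[OF finite_I, symmetric] sum.distrib sum_distrib_left sum_divide_distrib algebra_simps)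
  finally show "expectation (\<lambda>w. exp (\<Sum>m\<in>I. e m * ln (X m w)))
      = exp (\<mu> * (\<Sum>m\<in>I. e m) + \<sigma>\<^sup>2 / 2 * (\<Sum>m\<in>I. (e m)\<^sup>2))" .
qed

text \<open>This is \<open>X i w / X j w\<close> wherever both values are positive, i.e.\ almost surely; written
  via \<open>ln\<close>, every product of ratios is literally an exponential of a combination of the \<open>ln (X m)\<close>.\<close>
definition ratio :: "'i \<Rightarrow> 'i \<Rightarrow> 'a \<Rightarrow> real" where
  "ratio i j w = exp (ln (X i w) - ln (X j w))"

lemma ratio_product_moment:
  assumes "i \<in> I" "j \<in> I" "k \<in> I" "l \<in> I"
  shows "integrable M (\<lambda>w. ratio i j w * ratio k l w)"
    and "expectation (\<lambda>w. ratio i j w * ratio k l w) = exp (\<sigma>\<^sup>2 * ratio_exponent i j k l)"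
proof -
  define e where "e m = (of_bool (m = i) - of_bool (m = j) + of_bool (m = k) - of_bool (m = l) :: real)" for m
  have exponent: "(\<lambda>w. ratio i j w * ratio k l w) = (\<lambda>w. exp (\<Sum>m\<in>I. e m * ln (X m w)))"
    using finite_I assms
    by (simp add: fun_eq_iff ratio_def e_def exp_add[symmetric] algebra_simps sum.distrib sum_subtractf)
  have "(\<Sum>m\<in>I. e m) = 0"
    using finite_I assms by (simp add: e_def sum.distrib sum_subtractf)
  moreover have "(\<Sum>m\<in>I. (e m)\<^sup>2) = 2 * ratio_exponent i j k l"
    unfolding e_def by (rule sum_signed_deltas_square[OF finite_I assms])
  ultimately show "integrable M (\<lambda>w. ratio i j w * ratio k l w)"
    and "expectation (\<lambda>w. ratio i j w * ratio k l w) = exp (\<sigma>\<^sup>2 * ratio_exponent i j k l)"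
    unfolding exponent using exp_log_combination_moment[of e] by simp_all
qed

lemma ratio_moment:
  assumes "i \<in> I" "j \<in> I"
  shows "integrable M (ratio i j)" and "expectation (ratio i j) = exp (\<sigma>\<^sup>2 * (1 - of_bool (i = j)))"
proof -
  have "(\<lambda>w. ratio i j w * ratio i i w) = ratio i j" and "ratio_exponent i j i i = 1 - of_bool (i = j)"
    by (auto simp: fun_eq_iff ratio_def ratio_exponent_def)
  then show "integrable M (ratio i j)" and "expectation (ratio i j) = exp (\<sigma>\<^sup>2 * (1 - of_bool (i = j)))"
    using ratio_product_moment[OF assms assms(1) assms(1)] by simp_all
qed

definition ratio_sum :: "'a \<Rightarrow> real" where
  "ratio_sum w = (\<Sum>i\<in>I. X i w) * (\<Sum>j\<in>I. 1 / X j w)"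

lemma ratio_sum_AE_eq: "AE w in M. ratio_sum w = (\<Sum>i\<in>I. \<Sum>j\<in>I. ratio i j w)"
proof -
  have "AE w in M. \<forall>i\<in>I. 0 < X i w"
    using lognormal by (intro AE_finite_allI[OF finite_I]) (auto simp: lognormal_rv_def)
  then show ?thesis
    by eventually_elim (simp add: ratio_sum_def ratio_def exp_diff sum_product divide_inverse)
qed

lemma measurable_ratio_sum [measurable]: "ratio_sum \<in> borel_measurable M"
  unfolding ratio_sum_def by measurable

lemma integrable_ratio_sum: "integrable M ratio_sum"
  and expectation_ratio_sum: "expectation ratio_sum = real (card I) + real (card I) * (real (card I) - 1) * exp (\<sigma>\<^sup>2)"
proof -
  have "integrable M (\<lambda>w. \<Sum>i\<in>I. \<Sum>j\<in>I. ratio i j w)"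
    using ratio_moment(1) by simp
  note cong = integrable_integral_cong_AE[OF this measurable_ratio_sum ratio_sum_AE_eq]
  show "integrable M ratio_sum"
    by (fact cong(1))
  have "expectation ratio_sum = (\<Sum>i\<in>I. \<Sum>j\<in>I. expectation (ratio i j))"
    using cong(2) ratio_moment(1) by simp
  also have "\<dots> = (\<Sum>i\<in>I. \<Sum>j\<in>I. exp (\<sigma>\<^sup>2 * (1 - of_bool (i = j))))"
    using ratio_moment(2) by simp
  also have "\<dots> = (\<Sum>i\<in>I. 1 + (real (card I) - 1) * exp (\<sigma>\<^sup>2))"
    using finite_I by (intro sum.cong refl) (simp add: sum_fun_eq_member[where F = "\<lambda>b. exp (\<sigma>\<^sup>2 * (1 - of_bool b))"])
  also have "\<dots> = real (card I) + real (card I) * (real (card I) - 1) * exp (\<sigma>\<^sup>2)"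
    by (simp add: algebra_simps)
  finally show "expectation ratio_sum = real (card I) + real (card I) * (real (card I) - 1) * exp (\<sigma>\<^sup>2)" .
qed

lemma integrable_ratio_sum_square: "integrable M (\<lambda>w. (ratio_sum w)\<^sup>2)"
  and expectation_ratio_sum_square: "expectation (\<lambda>w. (ratio_sum w)\<^sup>2)
    = 2 * (real (card I) - 1) * (real (card I))\<^sup>2 * (exp (\<sigma>\<^sup>2) - 1)\<^sup>2
        * (1 + (exp (\<sigma>\<^sup>2) - 1) + (exp (\<sigma>\<^sup>2) - 1)\<^sup>2 / (2 * real (card I)))
      + (real (card I) + real (card I) * (real (card I) - 1) * exp (\<sigma>\<^sup>2))\<^sup>2"
proof -
  define ratio_products where "ratio_products w = (\<Sum>i\<in>I. \<Sum>k\<in>I. \<Sum>j\<in>I. \<Sum>l\<in>I. ratio i j w * ratio k l w)" for w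
  have AE_eq: "AE w in M. (ratio_sum w)\<^sup>2 = ratio_products w"
    using ratio_sum_AE_eq by eventually_elim (simp add: ratio_products_def power2_eq_square sum_product)
  have "integrable M ratio_products"
    unfolding ratio_products_def using ratio_product_moment(1) by simp
  note cong = integrable_integral_cong_AE[OF this _ AE_eq]
  show "integrable M (\<lambda>w. (ratio_sum w)\<^sup>2)"
    using cong(1) by simp
  have "expectation ratio_products = (\<Sum>i\<in>I. \<Sum>k\<in>I. \<Sum>j\<in>I. \<Sum>l\<in>I. exp (\<sigma>\<^sup>2 * ratio_exponent i j k l))"
    unfolding ratio_products_def using ratio_product_moment by simp
  with cong(2) show "expectation (\<lambda>w. (ratio_sum w)\<^sup>2)
    = 2 * (real (card I) - 1) * (real (card I))\<^sup>2 * (exp (\<sigma>\<^sup>2) - 1)\<^sup>2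
        * (1 + (exp (\<sigma>\<^sup>2) - 1) + (exp (\<sigma>\<^sup>2) - 1)\<^sup>2 / (2 * real (card I)))
      + (real (card I) + real (card I) * (real (card I) - 1) * exp (\<sigma>\<^sup>2))\<^sup>2"
    using sum4_exp_ratio_exponent[OF finite_I] by simp
qed

lemma variance_ratio_sum: "variance ratio_sum
    = 2 * (real (card I) - 1) * (real (card I))\<^sup>2 * (exp (\<sigma>\<^sup>2) - 1)\<^sup>2
        * (1 + (exp (\<sigma>\<^sup>2) - 1) + (exp (\<sigma>\<^sup>2) - 1)\<^sup>2 / (2 * real (card I)))"
  using variance_eq[OF integrable_ratio_sum integrable_ratio_sum_square]
  by (simp add: expectation_ratio_sum expectation_ratio_sum_square)

end

theorem proposition3:
  fixes M :: "'a measure" and X :: "nat \<Rightarrow> 'a \<Rightarrow> real"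
    and mu sg :: real and n :: nat
  assumes "prob_space M"
    and "0 < sg" and "2 \<le> n"
    and "prob_space.indep_vars M (\<lambda>_. borel) X {1..n}"
    and "\<And>i. i \<in> {1..n} \<Longrightarrow> lognormal_rv M (X i) mu sg"
  defines "A \<equiv> (\<lambda>w. (\<Sum>i=1..n. X i w) / real n)"
    and "H \<equiv> (\<lambda>w. real n / (\<Sum>i=1..n. 1 / X i w))"
    and "k \<equiv> exp (sg\<^sup>2) - 1"
  defines "K \<equiv> (\<lambda>w. A w / H w - 1)"
  shows "integrable M (\<lambda>w. (K w)\<^sup>2)
    \<and> prob_space.variance M K = 2 * (real n - 1) / (real n)\<^sup>2 * k\<^sup>2 * (1 + k + k\<^sup>2 / (2 * real n))
    \<and> sqrt (prob_space.variance M K) = k / real n * sqrt (2 * (real n - 1) * (1 + k + k\<^sup>2 / (2 * real n)))"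
proof -
  interpret lognormal_sample M X "{1..n}" mu sg
    using assms(1-5) by (simp add: lognormal_sample_def lognormal_sample_axioms_def)
  have n: "2 \<le> real n"
    using assms(3) by simp
  have K_affine: "K = (\<lambda>w. -1 + 1 / (real n)\<^sup>2 * ratio_sum w)"
    unfolding ratio_sum_def using n by (simp add: fun_eq_iff K_def A_def H_def power2_eq_square)
  note affine = variance_affine_integrable[OF integrable_ratio_sum integrable_ratio_sum_square, of "-1" "1 / (real n)\<^sup>2"]
  have variance: "variance K = 2 * (real n - 1) / (real n)\<^sup>2 * k\<^sup>2 * (1 + k + k\<^sup>2 / (2 * real n))"
    using affine(2) n unfolding K_affine variance_ratio_sum k_def
    by (simp add: field_simps power2_eq_square)
  moreover have "sqrt (variance K) = k / real n * sqrt (2 * (real n - 1) * (1 + k + k\<^sup>2 / (2 * real n)))"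
  proof -
    have "0 \<le> k"
      unfolding k_def by simp
    moreover have "variance K = (k / real n)\<^sup>2 * (2 * (real n - 1) * (1 + k + k\<^sup>2 / (2 * real n)))"
      unfolding variance by (simp add: power_divide)
    ultimately show ?thesis
      using n by (simp add: real_sqrt_mult)
  qed
  ultimately show ?thesis
    using affine(1) K_affine by simp
qed

end
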